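(* Let $\nu,b,c,t$ be positive integers with $2\nu\ge 2b+c+1$, $\nu>b\ge t+1$ and $c\ge t$. For $x\in\{t,t+1,\dots,b\}$ let $$g_{b,c}(x)={x\brack t}{c-t+1\brack 1}^{x-t}N'(x;b;2\nu).$$ Then $g_{b,c}(x+1)<g_{b,c}(x)$ for every $x\in\{t,\dots,b-1\}$, i.e. $g_{b,c}$ is strictly decreasing on $\{t,\dots,b\}$.
   Context: $q$ is a prime power. Gaussian binomial coefficient: ${n\brack k}=\prod_{i=0}^{k-1}\frac{q^{n-i}-1}{q^{k-i}-1}$, ${n\brack 0}=1$. For integers $0\le a\le m\le\nu$, $N'(a;m;2\nu)=\prod_{i=1}^{m-a}\frac{q^{2(\nu-m+i)}-1}{q^{i}-1}$. *)

theory Defs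
  imports Complex_Main "HOL-Computational_Algebra.Primes"
begin

definition prime_power :: "nat \<Rightarrow> bool" where
  "prime_power q \<longleftrightarrow> (\<exists>p k. prime p \<and> k > 0 \<and> q = p ^ k)"

definition gauss_binom :: "nat \<Rightarrow> nat \<Rightarrow> nat \<Rightarrow> real" where
  "gauss_binom q n k = (\<Prod>i<k. (real q ^ (n - i) - 1) / (real q ^ (k - i) - 1))"

definition Nprime :: "nat \<Rightarrow> nat \<Rightarrow> nat \<Rightarrow> nat \<Rightarrow> real" where
  "Nprime q a m \<nu> = (\<Prod>i=1..m-a. (real q ^ (2 * (\<nu> - m + i)) - 1) / (real q ^ i - 1))"

definition g_bc :: "nat \<Rightarrow> nat \<Rightarrow> nat \<Rightarrow> nat \<Rightarrow> nat \<Rightarrow> nat \<Rightarrow> real" where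
  "g_bc q \<nu> t b c x = gauss_binom q x t * gauss_binom q (c - t + 1) 1 ^ (x - t) * Nprime q x b \<nu>"

end

theory Submission
  imports Defs
begin

text \<open>The quotient \<open>g(x+1)/g(x)\<close> is the product of the three factors
  \<open>(q^(x+1) - 1)/(q^(x+1-t) - 1)\<close>, \<open>(q^(c-t+1) - 1)/(q - 1)\<close> and \<open>(q^(b-x) - 1)/(q^(2(\<nu>-x)) - 1)\<close>.
  The first is at most \<open>2q^t\<close>, the second at most \<open>q^(c-t+1)\<close>, and the numerator of the third is
  below \<open>q^(b-x)\<close>; the hypothesis \<open>2\<nu> \<ge> 2b + c + 1\<close> makes \<open>2(\<nu>-x)\<close> exceed the exponent
  \<open>t + (c-t+1) + (b-x)\<close> by at least one, which absorbs the factor 2.\<close>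

lemma power_minus_one_pos:
  fixes Q :: real
  assumes "1 < Q" and "k \<ge> 1"
  shows "0 < Q ^ k - 1"
  using assms by (simp add: one_less_power)

lemma power_minus_one_ratio_product_less_one:
  fixes Q :: real and a t n m E :: nat
  assumes Q: "Q \<ge> 2" and a: "a \<ge> 1" and E: "t + n + m + 1 \<le> E"
  shows "(Q^(a+t) - 1) / (Q^a - 1) * ((Q^n - 1) / (Q - 1)) * ((Q^m - 1) / (Q^E - 1)) < 1"
proof -
  have Qa: "Q^a \<ge> 2"
    using power_increasing[of 1 a Q] Q a by simp
  have Qt: "Q^t \<ge> 1"
    using Q by simp
  have "Q^(a+t) - 1 \<le> Q^a * Q^t"
    by (simp add: power_add)
  also have "\<dots> \<le> 2 * (Q^a - 1) * Q^t"
    using Qa Qt by (intro mult_right_mono) auto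
  finally have first: "Q^(a+t) - 1 \<le> 2 * Q^t * (Q^a - 1)"
    by (simp only: mult_ac)
  have "Q^n * 1 \<le> Q^n * (Q - 1)"
    using Q by (intro mult_left_mono) auto
  then have second: "Q^n - 1 \<le> Q^n * (Q - 1)"
    by simp
  have "(Q^(a+t) - 1) * (Q^n - 1) * (Q^m - 1) \<le> (2 * Q^t * (Q^a - 1)) * (Q^n * (Q - 1)) * (Q^m - 1)"
    using first second Q Qa by (intro mult_right_mono mult_mono) auto
  also have "\<dots> = (Q^a - 1) * (Q - 1) * (2 * Q^(t+n) * (Q^m - 1))"
    by (simp add: power_add mult_ac)
  also have "\<dots> < (Q^a - 1) * (Q - 1) * (Q^E - 1)"
  proof (rule mult_strict_left_mono)
    have "2 * Q^(t+n+m) \<le> Q^(t+n+m+1)"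
      using Q by (simp add: mult_right_mono)
    also have "\<dots> \<le> Q^E"
      using Q E by (intro power_increasing) auto
    finally have "2 * Q^(t+n) * Q^m \<le> Q^E"
      by (simp add: power_add)
    moreover have "1 \<le> Q^(t+n)"
      using Q by simp
    ultimately show "2 * Q^(t+n) * (Q^m - 1) < Q^E - 1"
      by (simp add: right_diff_distrib)
    show "0 < (Q^a - 1) * (Q - 1)"
      using Qa Q by simp
  qed
  finally have "(Q^(a+t) - 1) * (Q^n - 1) * (Q^m - 1) < (Q^a - 1) * (Q - 1) * (Q^E - 1)" .
  moreover have "0 < (Q^a - 1) * (Q - 1) * (Q^E - 1)"
    using power_minus_one_pos[of Q E] Q Qa E by simp
  ultimately show ?thesis
    by (simp only: times_divide_times_eq divide_less_eq_1_pos)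
qed

lemma gauss_binom_one: "gauss_binom q n 1 = (real q ^ n - 1) / (real q - 1)"
  by (simp add: gauss_binom_def)

lemma gauss_binom_pos:
  assumes "1 < q" and "t \<le> x"
  shows "0 < gauss_binom q x t"
  unfolding gauss_binom_def
  using assms by (intro prod_pos) (auto intro!: divide_pos_pos power_minus_one_pos)

lemma gauss_binom_Suc_upper:
  "gauss_binom q (x+1) t * (real q ^ (x+1-t) - 1) = gauss_binom q x t * (real q ^ (x+1) - 1)"
proof -
  define f where "f k = real q ^ k - 1" for k
  define D where "D = (\<Prod>i<t. f (t - i))"
  have "gauss_binom q (x+1) t * f (x+1-t) = (\<Prod>i<Suc t. f (x+1-i)) / D"
    unfolding gauss_binom_def D_def f_def by (simp add: prod_dividef)
  also have "(\<Prod>i<Suc t. f (x+1-i)) = f (x+1) * (\<Prod>i<t. f (x-i))"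
    by (subst prod.lessThan_Suc_shift) simp
  also have "\<dots> / D = gauss_binom q x t * f (x+1)"
    unfolding gauss_binom_def D_def f_def by (simp add: prod_dividef)
  finally show ?thesis
    unfolding f_def .
qed

lemma Nprime_pos:
  assumes "1 < q"
  shows "0 < Nprime q a m \<nu>"
  unfolding Nprime_def
  using assms by (intro prod_pos) (auto intro!: divide_pos_pos power_minus_one_pos)

lemma Nprime_Suc:
  assumes "x < m" and "m \<le> \<nu>"
  shows "Nprime q x m \<nu>
    = Nprime q (x+1) m \<nu> * ((real q ^ (2 * (\<nu> - x)) - 1) / (real q ^ (m - x) - 1))"
proof -
  define h where "h i = (real q ^ (2 * (\<nu> - m + i)) - 1) / (real q ^ i - 1)" for i
  have m_x: "m - x = Suc (m - (x+1))"
    using assms by simp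
  have "Nprime q x m \<nu> = prod h {1..Suc (m - (x+1))}"
    unfolding Nprime_def h_def m_x ..
  also have "\<dots> = Nprime q (x+1) m \<nu> * h (m - x)"
    unfolding Nprime_def h_def m_x by (subst prod.cl_ivl_Suc) simp
  also have "h (m - x) = (real q ^ (2 * (\<nu> - x)) - 1) / (real q ^ (m - x) - 1)"
    unfolding h_def using assms by simp
  finally show ?thesis .
qed

lemma g_bc_pos:
  assumes "1 < q" and "t \<le> x"
  shows "0 < g_bc q \<nu> t b c x"
  unfolding g_bc_def
  using assms gauss_binom_pos[of q 1 "c - t + 1"] by (simp add: gauss_binom_pos Nprime_pos)

lemma g_bc_Suc:
  assumes "1 < q" and "t \<le> x" and "x < b" and "b \<le> \<nu>"
  shows "g_bc q \<nu> t b c (x+1) = g_bc q \<nu> t b c x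
    * ((real q ^ (x+1) - 1) / (real q ^ (x+1-t) - 1) * ((real q ^ (c - t + 1) - 1) / (real q - 1))
       * ((real q ^ (b - x) - 1) / (real q ^ (2 * (\<nu> - x)) - 1)))"
proof -
  have "0 < real q ^ (x+1-t) - 1" and "0 < real q ^ (b - x) - 1"
    and "0 < real q ^ (2 * (\<nu> - x)) - 1"
    using assms by (auto intro!: power_minus_one_pos)
  then have A: "gauss_binom q (x+1) t = gauss_binom q x t * (real q ^ (x+1) - 1) / (real q ^ (x+1-t) - 1)"
    and N: "Nprime q (x+1) b \<nu> = Nprime q x b \<nu> * (real q ^ (b - x) - 1) / (real q ^ (2 * (\<nu> - x)) - 1)"
    using gauss_binom_Suc_upper[of q x t] Nprime_Suc[OF assms(3,4), of q]
    by (simp_all add: field_simps)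
  have G: "gauss_binom q (c - t + 1) 1 ^ (x + 1 - t)
      = gauss_binom q (c - t + 1) 1 ^ (x - t) * gauss_binom q (c - t + 1) 1"
    using assms(2) by (simp add: Suc_diff_le)
  show ?thesis
    unfolding g_bc_def A N G unfolding gauss_binom_one by (simp add: mult_ac)
qed

lemma prime_power_ge_2:
  assumes "prime_power q"
  shows "2 \<le> q"
proof -
  obtain p k where p: "prime p" and k: "k > 0" and q: "q = p ^ k"
    using assms unfolding prime_power_def by blast
  have "2 \<le> p"
    using p by (rule prime_ge_2_nat)
  also have "p \<le> p ^ k"
    using prime_ge_1_nat[OF p] k by (rule self_le_power)
  finally show ?thesis
    unfolding q .
qed

theorem lemma3p1:
  fixes q \<nu> b c t x :: nat
  assumes "prime_power q"
    and "\<nu> > 0" and "b > 0" and "c > 0" and "t > 0"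
    and "2 * \<nu> \<ge> 2 * b + c + 1"
    and "\<nu> > b" and "b \<ge> t + 1" and "c \<ge> t"
    and "t \<le> x" and "x \<le> b - 1"
  shows "g_bc q \<nu> t b c (x + 1) < g_bc q \<nu> t b c x"
proof -
  have q: "2 \<le> q"
    using assms(1) by (rule prime_power_ge_2)
  then have "1 < q"
    by simp
  have x: "t \<le> x" "x < b" "b \<le> \<nu>"
    using assms by linarith+
  have "x + 1 - t + t = x + 1"
    using x(1) by simp
  then have ratio: "(real q ^ (x+1) - 1) / (real q ^ (x+1-t) - 1)
      * ((real q ^ (c - t + 1) - 1) / (real q - 1))
      * ((real q ^ (b - x) - 1) / (real q ^ (2 * (\<nu> - x)) - 1)) < 1"
    using power_minus_one_ratio_product_less_one[of "real q" "x+1-t" t "c-t+1" "b-x" "2 * (\<nu> - x)"]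
      q assms(6,9) x by simp
  have "g_bc q \<nu> t b c (x + 1) < g_bc q \<nu> t b c x * 1"
    unfolding g_bc_Suc[OF \<open>1 < q\<close> x] using ratio g_bc_pos[OF \<open>1 < q\<close> x(1)]
    by (rule mult_strict_left_mono)
  then show ?thesis
    by simp
qed

end
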